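(* Let $(\mathbb{P},\le,f)$ be a forcing property for $\mathcal{L}_A$. For all $p\in\mathbb{P}$ and $\varphi\in\mathcal{L}_A^s(C)$: (1) $F_p(\varphi)\in[0,1]$; (2) if $q\le p$ then $F_q(\varphi)\le F_p(\varphi)$; (3) $F_p(\varphi)+F_p(\neg\varphi)\ge1$.
   Context: $\mathcal{L}$ is a countable continuous signature; formulas of $\mathcal{L}_{\omega_1,\omega}$ are built from atomic formulas using $\neg$, $\tfrac12$, $\dotplus$, countable conjunctions $\bigwedge$ and $\inf_x$. $\mathcal{L}_A$ is a countable fragment, $C=\{c_i:i<\omega\}$ new constants, $\mathcal{L}_A(C)$ the smallest countable fragment of $\mathcal{L}_{\omega_1,\omega}(C)$ containing $\mathcal{L}_A$, $\mathcal{L}_A^s(C)$ its sentences, $\mathcal{L}_A^{as}(C)$ its atomic sentences, $\mathcal{T}(C)$ closed terms. A forcing property $(\mathbb{P},\le,f)$: poset with $f_p\colon\mathcal{L}_A^{as}(C)\to[0,1]$ such that (1) $p\le q\Rightarrow f_p\le f_q$; (2) for every $p$, $\varepsilon>0$, $\tau,\sigma\in\mathcal{T}(C)$, atomic $\varphi(x)$ there are $q\le p$, $c\in C$ with $f_q(d(\tau,c))<\varepsilon$, $f_q(d(\tau,\sigma))<f_p(d(\sigma,\tau))+\varepsilon$, and if $f_p(d(\tau,\sigma))<\delta_{\varphi,x}(\varepsilon)$ then $f_q(\varphi(\sigma))<f_p(\varphi(\tau))+\varepsilon$. $F_p$ on sentences: $F_p(\varphi)=f_p(\varphi)$ for atomic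 $\varphi$; $F_p(\neg\varphi)=1-\inf_{q\le p}F_q(\varphi)$; $F_p(\tfrac12\varphi)=\tfrac12F_p(\varphi)$; $F_p(\varphi\dotplus\psi)=\min(F_p(\varphi)+F_p(\psi),1)$; $F_p(\bigwedge\Phi)=\inf_{\varphi\in\Phi}F_p(\varphi)$; $F_p(\inf_x\varphi)=\inf_{c\in C}F_p(\varphi(c))$. *)

theory Defs
  imports "HOL-Analysis.Analysis" "HOL-Library.Countable_Set_Type"
begin

text \<open>Terms over function symbols 'f (constants of L are 0-ary function symbols);
  variables are indexed by nat; CC i is the new constant c_i of C.\<close>
datatype 'f trm = Var nat | CC nat | Fn 'f "'f trm list"

datatype ('f,'r) atm = Dist "'f trm" "'f trm" | Rel 'r "'f trm list"

datatype ('f,'r) fm =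
    Atom "('f,'r) atm"
  | Neg "('f,'r) fm"
  | Half "('f,'r) fm"
  | Plus "('f,'r) fm" "('f,'r) fm"
  | Conj "('f,'r) fm cset"
  | Inf nat "('f,'r) fm"

primrec tfv :: "'f trm \<Rightarrow> nat set" where
  "tfv (Var x) = {x}"
| "tfv (CC i) = {}"
| "tfv (Fn g ts) = \<Union> (set (map tfv ts))"

primrec tccs :: "'f trm \<Rightarrow> nat set" where
  "tccs (Var x) = {}"
| "tccs (CC i) = {i}"
| "tccs (Fn g ts) = \<Union> (set (map tccs ts))"

primrec wf_trm :: "('f \<Rightarrow> nat) \<Rightarrow> 'f trm \<Rightarrow> bool" where
  "wf_trm ar (Var x) = True"
| "wf_trm ar (CC i) = True"
| "wf_trm ar (Fn g ts) = (length ts = ar g \<and> list_all (wf_trm ar) ts)"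

primrec tsubst :: "(nat \<Rightarrow> 'f trm) \<Rightarrow> 'f trm \<Rightarrow> 'f trm" where
  "tsubst \<sigma> (Var x) = \<sigma> x"
| "tsubst \<sigma> (CC i) = CC i"
| "tsubst \<sigma> (Fn g ts) = Fn g (map (tsubst \<sigma>) ts)"

definition closed_trm :: "('f \<Rightarrow> nat) \<Rightarrow> 'f trm \<Rightarrow> bool" where
  "closed_trm ar t \<longleftrightarrow> wf_trm ar t \<and> tfv t = {}"

fun afv :: "('f,'r) atm \<Rightarrow> nat set" where
  "afv (Dist t s) = tfv t \<union> tfv s"
| "afv (Rel r ts) = \<Union> (set (map tfv ts))"

fun accs :: "('f,'r) atm \<Rightarrow> nat set" where
  "accs (Dist t s) = tccs t \<union> tccs s"
| "accs (Rel r ts) = \<Union> (set (map tccs ts))"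

fun wf_atm :: "('f \<Rightarrow> nat) \<Rightarrow> ('r \<Rightarrow> nat) \<Rightarrow> ('f,'r) atm \<Rightarrow> bool" where
  "wf_atm ar rar (Dist t s) = (wf_trm ar t \<and> wf_trm ar s)"
| "wf_atm ar rar (Rel r ts) = (length ts = rar r \<and> list_all (wf_trm ar) ts)"

fun asubst :: "(nat \<Rightarrow> 'f trm) \<Rightarrow> ('f,'r) atm \<Rightarrow> ('f,'r) atm" where
  "asubst \<sigma> (Dist t s) = Dist (tsubst \<sigma> t) (tsubst \<sigma> s)"
| "asubst \<sigma> (Rel r ts) = Rel r (map (tsubst \<sigma>) ts)"

definition atomic_sentence :: "('f \<Rightarrow> nat) \<Rightarrow> ('r \<Rightarrow> nat) \<Rightarrow> ('f,'r) atm \<Rightarrow> bool" where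
  "atomic_sentence ar rar a \<longleftrightarrow> wf_atm ar rar a \<and> afv a = {}"

definition ainst :: "nat \<Rightarrow> 'f trm \<Rightarrow> ('f,'r) atm \<Rightarrow> ('f,'r) atm" where
  "ainst x t a = asubst (Var(x := t)) a"

primrec fv :: "('f,'r) fm \<Rightarrow> nat set" where
  "fv (Atom a) = afv a"
| "fv (Neg \<phi>) = fv \<phi>"
| "fv (Half \<phi>) = fv \<phi>"
| "fv (Plus \<phi> \<psi>) = fv \<phi> \<union> fv \<psi>"
| "fv (Conj \<Phi>) = \<Union> (rcset (cimage fv \<Phi>))"
| "fv (Inf x \<phi>) = fv \<phi> - {x}"

primrec ccs :: "('f,'r) fm \<Rightarrow> nat set" where
  "ccs (Atom a) = accs a"
| "ccs (Neg \<phi>) = ccs \<phi>"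
| "ccs (Half \<phi>) = ccs \<phi>"
| "ccs (Plus \<phi> \<psi>) = ccs \<phi> \<union> ccs \<psi>"
| "ccs (Conj \<Phi>) = \<Union> (rcset (cimage ccs \<Phi>))"
| "ccs (Inf x \<phi>) = ccs \<phi>"

primrec subst :: "nat \<Rightarrow> 'f trm \<Rightarrow> ('f,'r) fm \<Rightarrow> ('f,'r) fm" where
  "subst x t (Atom a) = Atom (ainst x t a)"
| "subst x t (Neg \<phi>) = Neg (subst x t \<phi>)"
| "subst x t (Half \<phi>) = Half (subst x t \<phi>)"
| "subst x t (Plus \<phi> \<psi>) = Plus (subst x t \<phi>) (subst x t \<psi>)"
| "subst x t (Conj \<Phi>) = Conj (cimage (subst x t) \<Phi>)"
| "subst x t (Inf y \<phi>) = (if y = x then Inf y \<phi> else Inf y (subst x t \<phi>))"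

inductive wff :: "('f \<Rightarrow> nat) \<Rightarrow> ('r \<Rightarrow> nat) \<Rightarrow> ('f,'r) fm \<Rightarrow> bool" for ar rar where
  "wf_atm ar rar a \<Longrightarrow> wff ar rar (Atom a)"
| "wff ar rar \<phi> \<Longrightarrow> wff ar rar (Neg \<phi>)"
| "wff ar rar \<phi> \<Longrightarrow> wff ar rar (Half \<phi>)"
| "wff ar rar \<phi> \<Longrightarrow> wff ar rar \<psi> \<Longrightarrow> wff ar rar (Plus \<phi> \<psi>)"
| "rcset \<Phi> \<noteq> {} \<Longrightarrow> (\<forall>\<psi>\<in>rcset \<Phi>. wff ar rar \<psi>) \<Longrightarrow> finite (fv (Conj \<Phi>))
     \<Longrightarrow> wff ar rar (Conj \<Phi>)"
| "wff ar rar \<phi> \<Longrightarrow> wff ar rar (Inf x \<phi>)"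

definition sentence :: "('f \<Rightarrow> nat) \<Rightarrow> ('r \<Rightarrow> nat) \<Rightarrow> ('f,'r) fm \<Rightarrow> bool" where
  "sentence ar rar \<phi> \<longleftrightarrow> wff ar rar \<phi> \<and> fv \<phi> = {}"

text \<open>Fragments. With wC = False: fragment of L_{omega1,omega} (no constants from C);
  with wC = True: fragment of L_{omega1,omega}(C).\<close>
definition fragment :: "('f \<Rightarrow> nat) \<Rightarrow> ('r \<Rightarrow> nat) \<Rightarrow> bool \<Rightarrow> ('f,'r) fm set \<Rightarrow> bool" where
  "fragment ar rar wC Fr \<longleftrightarrow>
     (\<forall>\<phi>\<in>Fr. wff ar rar \<phi> \<and> (wC \<or> ccs \<phi> = {})) \<and>
     (\<forall>a. wf_atm ar rar a \<and> (wC \<or> accs a = {}) \<longrightarrow> Atom a \<in> Fr) \<and>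
     (\<forall>\<phi>. Neg \<phi> \<in> Fr \<longrightarrow> \<phi> \<in> Fr) \<and>
     (\<forall>\<phi>. Half \<phi> \<in> Fr \<longrightarrow> \<phi> \<in> Fr) \<and>
     (\<forall>\<phi> \<psi>. Plus \<phi> \<psi> \<in> Fr \<longrightarrow> \<phi> \<in> Fr \<and> \<psi> \<in> Fr) \<and>
     (\<forall>\<Phi>. Conj \<Phi> \<in> Fr \<longrightarrow> rcset \<Phi> \<subseteq> Fr) \<and>
     (\<forall>x \<phi>. Inf x \<phi> \<in> Fr \<longrightarrow> \<phi> \<in> Fr) \<and>
     (\<forall>\<phi>\<in>Fr. Neg \<phi> \<in> Fr \<and> Half \<phi> \<in> Fr \<and> (\<forall>x. Inf x \<phi> \<in> Fr)) \<and>
     (\<forall>\<phi>\<in>Fr. \<forall>\<psi>\<in>Fr. Plus \<phi> \<psi> \<in> Fr \<and> Conj (cinsert \<phi> (cinsert \<psi> cempty)) \<in> Fr) \<and>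
     (\<forall>\<phi>\<in>Fr. \<forall>x t. closed_trm ar t \<and> (wC \<or> tccs t = {}) \<longrightarrow> subst x t \<phi> \<in> Fr)"

definition LAC :: "('f \<Rightarrow> nat) \<Rightarrow> ('r \<Rightarrow> nat) \<Rightarrow> ('f,'r) fm set \<Rightarrow> ('f,'r) fm set" where
  "LAC ar rar LA = \<Inter> {Fr. fragment ar rar True Fr \<and> countable Fr \<and> LA \<subseteq> Fr}"

text \<open>delta is the modulus of uniform continuity delta_{phi,x} of the atomic formula phi in x,
  given with the continuous signature.\<close>
definition forcing_property ::
  "('f \<Rightarrow> nat) \<Rightarrow> ('r \<Rightarrow> nat) \<Rightarrow> (('f,'r) atm \<Rightarrow> nat \<Rightarrow> real \<Rightarrow> real)
   \<Rightarrow> 'p set \<Rightarrow> ('p \<Rightarrow> 'p \<Rightarrow> bool) \<Rightarrow> ('p \<Rightarrow> ('f,'r) atm \<Rightarrow> real) \<Rightarrow> bool" where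
  "forcing_property ar rar \<delta> P le f \<longleftrightarrow>
     (\<forall>p\<in>P. le p p) \<and>
     (\<forall>p\<in>P. \<forall>q\<in>P. le p q \<and> le q p \<longrightarrow> p = q) \<and>
     (\<forall>p\<in>P. \<forall>q\<in>P. \<forall>r\<in>P. le p q \<and> le q r \<longrightarrow> le p r) \<and>
     (\<forall>p\<in>P. \<forall>a. atomic_sentence ar rar a \<longrightarrow> f p a \<in> {0..1}) \<and>
     (\<forall>p\<in>P. \<forall>q\<in>P. le p q \<longrightarrow> (\<forall>a. atomic_sentence ar rar a \<longrightarrow> f p a \<le> f q a)) \<and>
     (\<forall>p\<in>P. \<forall>\<epsilon>>0. \<forall>\<tau> \<sigma> \<phi> x.
        closed_trm ar \<tau> \<and> closed_trm ar \<sigma> \<and> wf_atm ar rar \<phi> \<and> afv \<phi> \<subseteq> {x} \<longrightarrow>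
        (\<exists>q\<in>P. le q p \<and> (\<exists>c. f q (Dist \<tau> (CC c)) < \<epsilon> \<and>
            f q (Dist \<tau> \<sigma>) < f p (Dist \<sigma> \<tau>) + \<epsilon> \<and>
            (f p (Dist \<tau> \<sigma>) < \<delta> \<phi> x \<epsilon> \<longrightarrow>
               f q (ainst x \<sigma> \<phi>) < f p (ainst x \<tau> \<phi>) + \<epsilon>))))"

text \<open>The forcing values. FF P le f phi rho p is F_p of phi[rho], where rho assigns
  constants of C to the variables bound so far; the inf_x clause ranges over c in C.\<close>
primrec FF :: "'p set \<Rightarrow> ('p \<Rightarrow> 'p \<Rightarrow> bool) \<Rightarrow> ('p \<Rightarrow> ('f,'r) atm \<Rightarrow> real)
               \<Rightarrow> ('f,'r) fm \<Rightarrow> (nat \<Rightarrow> 'f trm) \<Rightarrow> 'p \<Rightarrow> real" where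
  "FF P le f (Atom a) \<rho> p = f p (asubst \<rho> a)"
| "FF P le f (Neg \<phi>) \<rho> p = 1 - (INF q\<in>{q\<in>P. le q p}. FF P le f \<phi> \<rho> q)"
| "FF P le f (Half \<phi>) \<rho> p = FF P le f \<phi> \<rho> p / 2"
| "FF P le f (Plus \<phi> \<psi>) \<rho> p = min (FF P le f \<phi> \<rho> p + FF P le f \<psi> \<rho> p) 1"
| "FF P le f (Conj \<Phi>) \<rho> p = (INF g\<in>rcset (cimage (FF P le f) \<Phi>). g \<rho> p)"
| "FF P le f (Inf x \<phi>) \<rho> p = (INF c\<in>UNIV. FF P le f \<phi> (\<rho>(x := CC c)) p)"

definition Fp :: "'p set \<Rightarrow> ('p \<Rightarrow> 'p \<Rightarrow> bool) \<Rightarrow> ('p \<Rightarrow> ('f,'r) atm \<Rightarrow> real)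
                  \<Rightarrow> 'p \<Rightarrow> ('f,'r) fm \<Rightarrow> real" where
  "Fp P le f p \<phi> = FF P le f \<phi> Var p"

end

theory Submission
  imports Defs
begin

text \<open>By induction on the formula, every forcing value \<open>F_p(\<phi>[\<rho>])\<close> under an environment
  \<open>\<rho>\<close> sending the free variables to constants of \<open>C\<close> lies in \<open>[0,1]\<close> and decreases along
  \<open>\<le>\<close>: each connective preserves both properties, negation because shrinking the set of
  extensions \<open>q \<le> p\<close> can only raise the infimum. The third claim then holds because
  \<open>p\<close> is among its own extensions, so \<open>inf\<^sub>q\<^sub>\<le>\<^sub>p F_q(\<phi>) \<le> F_p(\<phi>)\<close>.\<close>

lemma closed_trm_tsubst:
  assumes "wf_trm ar t" "\<forall>x\<in>tfv t. \<exists>c. \<rho> x = CC c"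
  shows "closed_trm ar (tsubst \<rho> t)"
  using assms
proof (induction t)
  case (Fn g ts)
  then have "\<forall>t\<in>set ts. closed_trm ar (tsubst \<rho> t)"
    by (auto simp: list_all_iff)
  with Fn.prems(1) show ?case
    by (auto simp: closed_trm_def list_all_iff)
qed (auto simp: closed_trm_def)

lemma atomic_sentence_asubst:
  assumes "wf_atm ar rar a" "\<forall>x\<in>afv a. \<exists>c. \<rho> x = CC c"
  shows "atomic_sentence ar rar (asubst \<rho> a)"
  using assms closed_trm_tsubst[of ar _ \<rho>]
  by (cases a) (auto simp: atomic_sentence_def closed_trm_def list_all_iff)

definition unit_antitone_on :: "'p set \<Rightarrow> ('p \<Rightarrow> 'p \<Rightarrow> bool) \<Rightarrow> ('p \<Rightarrow> real) \<Rightarrow> bool" where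
  "unit_antitone_on P le g \<longleftrightarrow>
     (\<forall>p\<in>P. g p \<in> {0..1} \<and> (\<forall>q\<in>P. le q p \<longrightarrow> g q \<le> g p))"

lemma cINF_in_unit_interval:
  fixes g :: "'a \<Rightarrow> real"
  assumes "A \<noteq> {}" "\<And>x. x \<in> A \<Longrightarrow> g x \<in> {0..1}"
  shows "(INF x\<in>A. g x) \<in> {0..1}"
proof -
  obtain x where x: "x \<in> A" using assms(1) by blast
  have "bdd_below (g ` A)" using assms(2) by (auto intro!: bdd_belowI[where m=0])
  then have "(INF x\<in>A. g x) \<le> g x" using x by (rule cINF_lower)
  moreover have "0 \<le> (INF x\<in>A. g x)" using assms by (auto intro: cINF_greatest)
  ultimately show ?thesis using assms(2)[OF x] by auto
qed

lemma cINF_extensions_le: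
  assumes "unit_antitone_on P le g" "p \<in> P" "le p p"
  shows "(INF q\<in>{q\<in>P. le q p}. g q) \<le> g p"
proof (rule cINF_lower)
  show "bdd_below (g ` {q\<in>P. le q p})"
    using assms(1) by (auto simp: unit_antitone_on_def intro!: bdd_belowI[where m=0])
qed (use assms in auto)

lemma unit_antitone_on_Neg:
  assumes refl: "\<And>p. p \<in> P \<Longrightarrow> le p p"
    and trans: "\<And>p q r. p \<in> P \<Longrightarrow> q \<in> P \<Longrightarrow> r \<in> P \<Longrightarrow> le p q \<Longrightarrow> le q r \<Longrightarrow> le p r"
    and g: "unit_antitone_on P le g"
  shows "unit_antitone_on P le (\<lambda>p. 1 - (INF q\<in>{q\<in>P. le q p}. g q))"
  unfolding unit_antitone_on_def
proof (intro ballI conjI impI)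
  fix p assume p: "p \<in> P"
  have "(INF q\<in>{q\<in>P. le q p}. g q) \<in> {0..1}"
    using p refl g by (intro cINF_in_unit_interval) (auto simp: unit_antitone_on_def)
  then show "1 - (INF q\<in>{q\<in>P. le q p}. g q) \<in> {0..1}" by simp
  fix q assume q: "q \<in> P" "le q p"
  have "(INF r\<in>{r\<in>P. le r p}. g r) \<le> (INF r\<in>{r\<in>P. le r q}. g r)"
  proof (rule cINF_superset_mono)
    show "{r\<in>P. le r q} \<noteq> {}" using q refl by auto
    show "bdd_below (g ` {r\<in>P. le r p})"
      using g by (auto simp: unit_antitone_on_def intro!: bdd_belowI[where m=0])
    show "{r\<in>P. le r q} \<subseteq> {r\<in>P. le r p}" using trans p q by blast
  qed simp
  then show "1 - (INF r\<in>{r\<in>P. le r q}. g r) \<le> 1 - (INF r\<in>{r\<in>P. le r p}. g r)" by simp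
qed

lemma unit_antitone_on_half:
  "unit_antitone_on P le g \<Longrightarrow> unit_antitone_on P le (\<lambda>p. g p / 2)"
  by (auto simp: unit_antitone_on_def)

lemma unit_antitone_on_truncated_add:
  "unit_antitone_on P le g \<Longrightarrow> unit_antitone_on P le h \<Longrightarrow>
   unit_antitone_on P le (\<lambda>p. min (g p + h p) 1)"
  unfolding unit_antitone_on_def by (smt (verit) atLeastAtMost_iff)

lemma unit_antitone_on_INF:
  assumes "A \<noteq> {}" "\<And>i. i \<in> A \<Longrightarrow> unit_antitone_on P le (g i)"
  shows "unit_antitone_on P le (\<lambda>p. INF i\<in>A. g i p)"
  unfolding unit_antitone_on_def
proof (intro ballI conjI impI)
  fix p assume p: "p \<in> P"
  then show "(INF i\<in>A. g i p) \<in> {0..1}"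
    using assms by (intro cINF_in_unit_interval) (auto simp: unit_antitone_on_def)
  fix q assume q: "q \<in> P" "le q p"
  show "(INF i\<in>A. g i q) \<le> (INF i\<in>A. g i p)"
  proof (rule cINF_mono[OF assms(1)])
    show "bdd_below ((\<lambda>i. g i q) ` A)"
      using assms(2) q by (auto simp: unit_antitone_on_def intro!: bdd_belowI[where m=0])
    show "\<exists>j\<in>A. g j q \<le> g i p" if "i \<in> A" for i
      using that assms(2)[OF that] p q by (auto simp: unit_antitone_on_def)
  qed
qed

lemma forcing_property_preorder:
  assumes "forcing_property ar rar \<delta> P le f"
  shows "\<And>p. p \<in> P \<Longrightarrow> le p p"
    and "\<And>p q r. p \<in> P \<Longrightarrow> q \<in> P \<Longrightarrow> r \<in> P \<Longrightarrow> le p q \<Longrightarrow> le q r \<Longrightarrow> le p r"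
  using assms unfolding forcing_property_def by blast+

lemma forcing_property_atomic:
  assumes "forcing_property ar rar \<delta> P le f" "atomic_sentence ar rar a"
  shows "unit_antitone_on P le (\<lambda>p. f p a)"
  using assms unfolding forcing_property_def unit_antitone_on_def by blast

lemma unit_antitone_on_FF:
  assumes fp: "forcing_property ar rar \<delta> P le f"
    and "wff ar rar \<phi>" "\<forall>x\<in>fv \<phi>. \<exists>c. \<rho> x = CC c"
  shows "unit_antitone_on P le (FF P le f \<phi> \<rho>)"
  using assms(2,3)
proof (induction \<phi> arbitrary: \<rho> rule: wff.induct)
  case (1 a)
  then show ?case
    by (simp add: forcing_property_atomic[OF fp] atomic_sentence_asubst)
next
  case (2 \<phi>)
  then have "unit_antitone_on P le (FF P le f \<phi> \<rho>)" by simp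
  with forcing_property_preorder[OF fp]
  have "unit_antitone_on P le (\<lambda>p. 1 - (INF q\<in>{q\<in>P. le q p}. FF P le f \<phi> \<rho> q))"
    by (rule unit_antitone_on_Neg)
  then show ?case by simp
next
  case (3 \<phi>)
  then show ?case by (simp add: unit_antitone_on_half)
next
  case (4 \<phi> \<psi>)
  then show ?case by (simp add: unit_antitone_on_truncated_add)
next
  case (5 \<Phi>)
  have "unit_antitone_on P le (\<lambda>p. INF \<psi>\<in>rcset \<Phi>. FF P le f \<psi> \<rho> p)"
    using 5 by (intro unit_antitone_on_INF) (auto simp: cimage.rep_eq)
  then show ?case by (simp add: cimage.rep_eq image_image)
next
  case (6 \<phi> x)
  then show ?case by (auto intro: unit_antitone_on_INF)
qed

theorem lemma2p5:
  fixes ar :: "'f::countable \<Rightarrow> nat" and rar :: "'r::countable \<Rightarrow> nat"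
    and \<delta> :: "('f,'r) atm \<Rightarrow> nat \<Rightarrow> real \<Rightarrow> real"
    and LA :: "('f,'r) fm set"
    and P :: "'p set" and le :: "'p \<Rightarrow> 'p \<Rightarrow> bool" and f :: "'p \<Rightarrow> ('f,'r) atm \<Rightarrow> real"
  assumes "fragment ar rar False LA" and "countable LA"
    and "forcing_property ar rar \<delta> P le f"
    and "p \<in> P" and "\<phi> \<in> LAC ar rar LA" and "sentence ar rar \<phi>"
  shows "Fp P le f p \<phi> \<in> {0..1} \<and>
         (\<forall>q\<in>P. le q p \<longrightarrow> Fp P le f q \<phi> \<le> Fp P le f p \<phi>) \<and>
         Fp P le f p \<phi> + Fp P le f p (Neg \<phi>) \<ge> 1"
proof -
  have F: "unit_antitone_on P le (FF P le f \<phi> Var)"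
    using assms(6) by (intro unit_antitone_on_FF[OF assms(3)]) (auto simp: sentence_def)
  have "(INF q\<in>{q\<in>P. le q p}. FF P le f \<phi> Var q) \<le> FF P le f \<phi> Var p"
    using cINF_extensions_le[OF F assms(4) forcing_property_preorder(1)[OF assms(3,4)]] .
  with F assms(4) show ?thesis
    by (auto simp: Fp_def unit_antitone_on_def)
qed

end
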